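(* Let $\phi:\mathbf{R}^n\to\mathbf{R}$ be a uniformly convex norm of class $\mathcal{C}^2$ on $\mathbf{R}^n\setminus\{0\}$, $K\subseteq\mathbf{R}^n$ closed, $0<s<t<\infty$, $1<\lambda<\infty$, and $K_{\lambda,s,t}=\{x:\rho^\phi_K(x)\ge\lambda,\ s\le\delta^\phi_K(x)\le t\}$. Then there exists $\Gamma\in\mathbf{R}$ depending only on $s,t,\lambda,\phi$ such that $$\phi(\xi^\phi_K(a)-y)\le\Gamma\,\phi(a-b)$$ whenever $a\in K_{\lambda,s,t}$, $b\in\mathbf{R}^n$, $y\in\xi^\phi_K(b)$ and $\delta^\phi_K(b)\le t$. In particular $\xi^\phi_K|K_{\lambda,s,t}$ is Lipschitz continuous.
   Context: A norm $\phi$ on $\mathbf{R}^n$ is uniformly convex if there is $\gamma>0$ such that $x\mapsto\phi(x)-\gamma|x|$ is convex. For closed $K$: $\delta^\phi_K(x)=\inf\{\phi(y-x):y\in K\}$; $\xi^\phi_K(x)=K\cap\{w:\phi(x-w)=\delta^\phi_K(x)\}$ (on $K_{\lambda,s,t}$ this set is a singleton, identified with its element); $\rho^\phi_K(x)=\sup\bigl(\mathbf{R}\cap\{s':\delta^\phi_K(w+s'(x-w))=s'\delta^\phi_K(x)\}\bigr)$ for any $w\in\xi^\phi_K(x)$ (independent of the choice of $w$). *)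

theory Defs
  imports "HOL-Analysis.Analysis"
begin

definition is_norm_fun :: "('a::euclidean_space \<Rightarrow> real) \<Rightarrow> bool" where
  "is_norm_fun \<phi> \<longleftrightarrow>
     (\<forall>x. 0 \<le> \<phi> x) \<and> (\<forall>x. \<phi> x = 0 \<longleftrightarrow> x = 0) \<and>
     (\<forall>c x. \<phi> (c *\<^sub>R x) = \<bar>c\<bar> * \<phi> x) \<and>
     (\<forall>x y. \<phi> (x + y) \<le> \<phi> x + \<phi> y)"

definition uniformly_convex_norm :: "('a::euclidean_space \<Rightarrow> real) \<Rightarrow> bool" where
  "uniformly_convex_norm \<phi> \<longleftrightarrow> is_norm_fun \<phi> \<and>
     (\<exists>\<gamma>>0. convex_on UNIV (\<lambda>x. \<phi> x - \<gamma> * norm x))"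

definition C2_on :: "'a::euclidean_space set \<Rightarrow> ('a \<Rightarrow> real) \<Rightarrow> bool" where
  "C2_on S f \<longleftrightarrow>
     (\<exists>(f' :: 'a \<Rightarrow> 'a \<Rightarrow>\<^sub>L real) (f'' :: 'a \<Rightarrow> 'a \<Rightarrow>\<^sub>L ('a \<Rightarrow>\<^sub>L real)).
        (\<forall>x\<in>S. (f has_derivative blinfun_apply (f' x)) (at x)) \<and>
        (\<forall>x\<in>S. (f' has_derivative blinfun_apply (f'' x)) (at x)) \<and>
        continuous_on S f'')"

definition dist_fn :: "('a::euclidean_space \<Rightarrow> real) \<Rightarrow> 'a set \<Rightarrow> 'a \<Rightarrow> real" where
  "dist_fn \<phi> K x = Inf ((\<lambda>y. \<phi> (y - x)) ` K)"

definition nearest :: "('a::euclidean_space \<Rightarrow> real) \<Rightarrow> 'a set \<Rightarrow> 'a \<Rightarrow> 'a set" where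
  "nearest \<phi> K x = K \<inter> {w. \<phi> (x - w) = dist_fn \<phi> K x}"

text \<open>Reach function, valued in extended reals (the supremum may be +infinity);
  computed for an arbitrary chosen w in the nearest-point set.\<close>
definition reach_fn :: "('a::euclidean_space \<Rightarrow> real) \<Rightarrow> 'a set \<Rightarrow> 'a \<Rightarrow> ereal" where
  "reach_fn \<phi> K x =
     (let w = (SOME w. w \<in> nearest \<phi> K x) in
      Sup (ereal ` {s'::real. dist_fn \<phi> K (w + s' *\<^sub>R (x - w)) = s' * dist_fn \<phi> K x}))"

definition K_lst :: "('a::euclidean_space \<Rightarrow> real) \<Rightarrow> 'a set \<Rightarrow> real \<Rightarrow> real \<Rightarrow> real \<Rightarrow> 'a set" where
  "K_lst \<phi> K lam s t = {x. ereal lam \<le> reach_fn \<phi> K x \<and> s \<le> dist_fn \<phi> K x \<and> dist_fn \<phi> K x \<le> t}"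

end

theory Submission
  imports Defs
begin

(* Uniform convexity makes \<phi>\<^sup>2 strongly convex: along segments it lies below the chord by
   t (1 - t) \<sigma> |p - q|\<^sup>2, where \<sigma> = \<gamma>\<^sup>4 / (8 C\<^sup>2) and C bounds \<phi> by the Euclidean norm.
   Being C\<^sup>2 off the origin and positively homogeneous, \<phi> has a gradient of degree 0 and a
   Hessian of degree -1, so the gradient of \<phi>\<^sup>2 is globally Lipschitz, with constant L say,
   and the second differences of \<phi>\<^sup>2 are bounded by L |y| |h|.

   If the reach at a exceeds \<mu> > 1 and w is a nearest point of a, then K avoids the open
   \<phi>-ball of radius \<mu> \<delta>(a) about w + \<mu> (a - w). So for y \<in> K the point w + (y - w) / \<mu> is at
   \<phi>-distance at least \<delta>(a) = \<phi>(w - a) from a, and strong convexity of \<phi>\<^sup>2(. - a) on the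
   segment from w to y gives \<sigma> (1 - 1/\<mu>) |y - w|\<^sup>2 \<le> \<phi>(y - a)\<^sup>2 - \<phi>(w - a)\<^sup>2. If y is nearest
   to b, then \<phi>(y - b) \<le> \<phi>(w - b), and the second-difference bound with h = b - a turns this
   into |y - w| \<le> L / (\<sigma> (1 - 1/\<mu>)) |b - a|. Taking b = a shows that w is the unique
   nearest point of a. *)

lemma sq_ge_half_sq_minus_sq:
  fixes a x y :: real
  assumes "0 \<le> x" and "x - \<bar>y\<bar> \<le> a"
  shows "x\<^sup>2 / 2 - y\<^sup>2 \<le> a\<^sup>2"
proof (cases "\<bar>y\<bar> \<le> x")
  case True
  then have "(x - \<bar>y\<bar>)\<^sup>2 \<le> a\<^sup>2"
    using assms(2) by (intro power_mono) auto
  moreover have "0 \<le> (x - 2 * \<bar>y\<bar>)\<^sup>2"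
    by simp
  ultimately show ?thesis
    by (simp add: power2_eq_square algebra_simps)
next
  case False
  then have "x\<^sup>2 \<le> y\<^sup>2"
    using assms(1) power_mono[of x "\<bar>y\<bar>" 2] by simp
  then show ?thesis
    using zero_le_power2[of a] zero_le_power2[of x] by linarith
qed

lemma norm_rescaled_diff_sq_le:
  fixes p q :: "'a::real_inner"
  assumes "norm q \<le> norm p" and "p \<noteq> 0"
  shows "(norm ((norm q / norm p) *\<^sub>R p - q))\<^sup>2 \<le> 2 * (norm p * norm q - p \<bullet> q)"
proof -
  define c where "c = norm q / norm p"
  have c: "0 \<le> c" "c \<le> 1"
    using assms by (auto simp: c_def)
  have P: "0 \<le> norm p * norm q - p \<bullet> q"
    using norm_cauchy_schwarz[of p q] by simp
  have "(norm (c *\<^sub>R p - q))\<^sup>2 = (c *\<^sub>R p - q) \<bullet> (c *\<^sub>R p - q)"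
    by (simp add: power2_norm_eq_inner)
  also have "\<dots> = c\<^sup>2 * (p \<bullet> p) - 2 * c * (p \<bullet> q) + q \<bullet> q"
    by (simp add: inner_diff_left inner_diff_right inner_commute power2_eq_square algebra_simps)
  also have "\<dots> = c\<^sup>2 * (norm p)\<^sup>2 - 2 * c * (p \<bullet> q) + (norm q)\<^sup>2"
    by (simp add: power2_norm_eq_inner)
  also have "\<dots> = c * (2 * (norm p * norm q - p \<bullet> q))"
    using assms(2) by (simp add: c_def power2_eq_square field_simps)
  also have "\<dots> \<le> 2 * (norm p * norm q - p \<bullet> q)"
    using c P by (simp add: mult_left_le_one_le)
  finally show ?thesis
    by (simp add: c_def)
qed

lemma norm_convex_combination_sq_gap:
  fixes p q :: "'a::real_inner"
  shows "((1 - t) * norm p + t * norm q)\<^sup>2 - (norm ((1 - t) *\<^sub>R p + t *\<^sub>R q))\<^sup>2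
    = 2 * t * (1 - t) * (norm p * norm q - p \<bullet> q)"
proof -
  have "(norm ((1 - t) *\<^sub>R p + t *\<^sub>R q))\<^sup>2 = ((1 - t) *\<^sub>R p + t *\<^sub>R q) \<bullet> ((1 - t) *\<^sub>R p + t *\<^sub>R q)"
    by (simp add: power2_norm_eq_inner)
  also have "\<dots> = (1 - t)\<^sup>2 * (p \<bullet> p) + 2 * t * (1 - t) * (p \<bullet> q) + t\<^sup>2 * (q \<bullet> q)"
    by (simp add: inner_add_left inner_add_right inner_commute power2_eq_square algebra_simps)
  also have "\<dots> = (1 - t)\<^sup>2 * (norm p)\<^sup>2 + 2 * t * (1 - t) * (p \<bullet> q) + t\<^sup>2 * (norm q)\<^sup>2"
    by (simp add: power2_norm_eq_inner)
  finally show ?thesis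
    by (simp add: power2_eq_square algebra_simps)
qed

lemma second_difference_le:
  fixes g :: "'a::real_normed_vector \<Rightarrow> real"
  assumes deriv: "\<And>x. (g has_derivative blinfun_apply (G x)) (at x)"
    and lip: "\<And>p q. norm (G p - G q) \<le> L * norm (p - q)"
  shows "g (z + y) - g z \<le> g (z + y - h) - g (z - h) + L * norm y * norm h"
proof -
  define d where "d v = g (z + y - v) - g (z - v)" for v
  have "norm (d h - d 0) \<le> (L * norm y) * norm (h - 0)"
  proof (rule differentiable_bound[of UNIV d "\<lambda>v. blinfun_apply (G (z - v) - G (z + y - v))"])
    fix v :: 'a
    have "(d has_derivative (\<lambda>e. blinfun_apply (G (z + y - v)) (0 - e) - blinfun_apply (G (z - v)) (0 - e))) (at v)"
      unfolding d_def
      by (intro has_derivative_diff has_derivative_compose[OF _ deriv]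
          has_derivative_diff[OF has_derivative_const has_derivative_ident])
    moreover have "(\<lambda>e. blinfun_apply (G (z + y - v)) (0 - e) - blinfun_apply (G (z - v)) (0 - e))
        = blinfun_apply (G (z - v) - G (z + y - v))"
      by (rule ext) (simp add: blinfun.minus_right blinfun.diff_left)
    ultimately show "(d has_derivative blinfun_apply (G (z - v) - G (z + y - v))) (at v within UNIV)"
      by simp
    have "norm (G (z - v) - G (z + y - v)) \<le> L * norm ((z - v) - (z + y - v))"
      by (rule lip)
    then show "onorm (blinfun_apply (G (z - v) - G (z + y - v))) \<le> L * norm y"
      by (simp add: norm_blinfun.rep_eq)
  qed auto
  then show ?thesis
    unfolding d_def by (simp add: abs_le_iff)
qed

locale norm_fun =
  fixes \<phi> :: "'a::euclidean_space \<Rightarrow> real"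
  assumes is_norm: "is_norm_fun \<phi>"
begin

lemma phi_nonneg: "0 \<le> \<phi> x"
  using is_norm by (auto simp: is_norm_fun_def)

lemma phi_eq_0_iff: "\<phi> x = 0 \<longleftrightarrow> x = 0"
  using is_norm by (auto simp: is_norm_fun_def)

lemma phi_0 [simp]: "\<phi> 0 = 0"
  using phi_eq_0_iff by simp

lemma phi_scaleR: "\<phi> (c *\<^sub>R x) = \<bar>c\<bar> * \<phi> x"
  using is_norm by (auto simp: is_norm_fun_def)

lemma phi_scaleR_nonneg: "0 \<le> c \<Longrightarrow> \<phi> (c *\<^sub>R x) = c * \<phi> x"
  by (simp add: phi_scaleR)

lemma phi_triangle: "\<phi> (x + y) \<le> \<phi> x + \<phi> y"
  using is_norm by (auto simp: is_norm_fun_def)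

lemma phi_minus [simp]: "\<phi> (- x) = \<phi> x"
  using phi_scaleR[of "-1" x] by simp

lemma phi_minus_commute: "\<phi> (x - y) = \<phi> (y - x)"
  using phi_minus[of "x - y"] by simp

lemma phi_abs_diff_le: "\<bar>\<phi> x - \<phi> y\<bar> \<le> \<phi> (x - y)"
  using phi_triangle[of "x - y" y] phi_triangle[of "y - x" x] phi_minus_commute[of x y] by auto

lemma phi_sum_le: "finite F \<Longrightarrow> \<phi> (\<Sum>i\<in>F. f i) \<le> (\<Sum>i\<in>F. \<phi> (f i))"
proof (induction rule: finite_induct)
  case (insert i F)
  then show ?case using phi_triangle[of "f i" "\<Sum>i\<in>F. f i"] by simp
qed simp

definition C :: real where "C = (\<Sum>b\<in>Basis. \<phi> b)"

lemma phi_le_C_norm: "\<phi> x \<le> C * norm x"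
proof -
  have "\<phi> x = \<phi> (\<Sum>b\<in>Basis. (x \<bullet> b) *\<^sub>R b)"
    by (simp add: euclidean_representation)
  also have "\<dots> \<le> (\<Sum>b\<in>Basis. \<bar>x \<bullet> b\<bar> * \<phi> b)"
    using phi_sum_le[of Basis "\<lambda>b. (x \<bullet> b) *\<^sub>R b"] by (simp add: phi_scaleR)
  also have "\<dots> \<le> (\<Sum>b\<in>Basis. norm x * \<phi> b)"
    by (intro sum_mono mult_right_mono Basis_le_norm phi_nonneg)
  finally show ?thesis
    by (simp add: C_def sum_distrib_left mult.commute)
qed

lemma C_pos: "0 < C"
proof -
  obtain b :: 'a where b: "b \<in> Basis"
    using nonempty_Basis by blast
  then have "0 < \<phi> b"
    using phi_nonneg[of b] phi_eq_0_iff[of b] by (auto simp: nonzero_Basis)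
  also have "\<phi> b \<le> C"
    unfolding C_def using b by (intro member_le_sum phi_nonneg) auto
  finally show ?thesis .
qed

lemma phi_abs_diff_le_C_norm: "\<bar>\<phi> x - \<phi> y\<bar> \<le> C * norm (x - y)"
  using phi_abs_diff_le[of x y] phi_le_C_norm[of "x - y"] by simp

lemma continuous_on_phi: "continuous_on S \<phi>"
proof -
  have "C-lipschitz_on S \<phi>"
    unfolding lipschitz_on_def using C_pos phi_abs_diff_le_C_norm
    by (auto simp: dist_norm dist_real_def)
  then show ?thesis
    using lipschitz_on_continuous_on by blast
qed

end

locale uc_norm = norm_fun +
  fixes \<gamma> :: real
  assumes gamma_pos: "0 < \<gamma>"
    and convex_phi_minus_norm: "convex_on UNIV (\<lambda>x. \<phi> x - \<gamma> * norm x)"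
begin

lemma phi_minus_norm_convex:
  assumes "0 \<le> t" and "t \<le> 1"
  shows "\<phi> ((1 - t) *\<^sub>R x + t *\<^sub>R y) - \<gamma> * norm ((1 - t) *\<^sub>R x + t *\<^sub>R y)
    \<le> (1 - t) * (\<phi> x - \<gamma> * norm x) + t * (\<phi> y - \<gamma> * norm y)"
  using convex_onD[OF convex_phi_minus_norm, of t x y] assms by simp

lemma gamma_norm_le_phi: "\<gamma> * norm x \<le> \<phi> x"
  using phi_minus_norm_convex[of "1/2" x "-x"] by simp

lemma gamma_le_C: "\<gamma> \<le> C"
proof -
  obtain b :: 'a where "b \<in> Basis"
    using nonempty_Basis by blast
  then show ?thesis
    using gamma_norm_le_phi[of b] phi_le_C_norm[of b] by simp
qed

lemma phi_diff_sq_ge_of_norm_le: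
  assumes le: "norm q \<le> norm p"
  shows "\<gamma>\<^sup>2 * (norm p - norm q)\<^sup>2 / 2 - 2 * C\<^sup>2 * (norm p * norm q - p \<bullet> q) \<le> (\<phi> p - \<phi> q)\<^sup>2"
proof (cases "p = 0")
  case True
  then show ?thesis
    using le by simp
next
  case False
  define c where "c = norm q / norm p"
  have c: "0 \<le> c" "c \<le> 1"
    using le False by (auto simp: c_def)
  (* c p has the norm of q: going from p to c p gains at least \<gamma> (|p| - |q|), and going
     on from c p to q loses at most C |c p - q| *)
  have radial: "\<gamma> * (norm p - norm q) \<le> \<phi> p - \<phi> (c *\<^sub>R p)"
  proof -
    have "(1 - c) * (\<gamma> * norm p) \<le> (1 - c) * \<phi> p"
      using c gamma_norm_le_phi[of p] by (intro mult_left_mono) auto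
    then show ?thesis
      using False c by (simp add: c_def phi_scaleR_nonneg algebra_simps)
  qed
  have "(\<phi> (c *\<^sub>R p) - \<phi> q)\<^sup>2 \<le> (C * norm (c *\<^sub>R p - q))\<^sup>2"
    using power_mono[OF phi_abs_diff_le_C_norm[of "c *\<^sub>R p" q] abs_ge_zero, of 2] by simp
  also have "\<dots> \<le> C\<^sup>2 * (2 * (norm p * norm q - p \<bullet> q))"
    using norm_rescaled_diff_sq_le[OF le False] by (simp add: c_def power_mult_distrib mult_left_mono)
  finally have tangential: "(\<phi> (c *\<^sub>R p) - \<phi> q)\<^sup>2 \<le> C\<^sup>2 * (2 * (norm p * norm q - p \<bullet> q))" .
  have "(\<gamma> * (norm p - norm q))\<^sup>2 / 2 - (\<phi> (c *\<^sub>R p) - \<phi> q)\<^sup>2 \<le> (\<phi> p - \<phi> q)\<^sup>2"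
    using le gamma_pos radial by (intro sq_ge_half_sq_minus_sq) auto
  moreover have "(\<gamma> * (norm p - norm q))\<^sup>2 = \<gamma>\<^sup>2 * (norm p - norm q)\<^sup>2"
    by (simp add: power_mult_distrib)
  ultimately show ?thesis
    using tangential by linarith
qed

lemma phi_diff_sq_ge:
  "\<gamma>\<^sup>2 * (norm p - norm q)\<^sup>2 / 2 - 2 * C\<^sup>2 * (norm p * norm q - p \<bullet> q) \<le> (\<phi> p - \<phi> q)\<^sup>2"
proof (cases "norm q \<le> norm p")
  case False
  then show ?thesis
    using phi_diff_sq_ge_of_norm_le[of p q]
    by (simp add: inner_commute power2_commute mult.commute)
qed (rule phi_diff_sq_ge_of_norm_le)

lemma phi_sq_convex_bound:
  assumes t0: "0 \<le> t" and t1: "t \<le> 1"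
  shows "(\<phi> ((1 - t) *\<^sub>R p + t *\<^sub>R q))\<^sup>2 \<le> (1 - t) * (\<phi> p)\<^sup>2 + t * (\<phi> q)\<^sup>2
    - t * (1 - t) * ((\<phi> p - \<phi> q)\<^sup>2 + \<gamma>\<^sup>2 * (norm p * norm q - p \<bullet> q))"
proof -
  define m where "m = (1 - t) *\<^sub>R p + t *\<^sub>R q"
  define A where "A = (1 - t) * \<phi> p + t * \<phi> q"
  define N where "N = (1 - t) * norm p + t * norm q"
  define P where "P = norm p * norm q - p \<bullet> q"
  have MN: "norm m \<le> N"
    unfolding m_def N_def using norm_triangle_ineq[of "(1 - t) *\<^sub>R p" "t *\<^sub>R q"] t0 t1 by simp
  have phi_m: "\<phi> m \<le> A - \<gamma> * (N - norm m)"
    using phi_minus_norm_convex[OF t0 t1, of p q] by (simp add: m_def A_def N_def algebra_simps)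
  have AN: "\<gamma> * N \<le> A"
    using gamma_norm_le_phi[of p] gamma_norm_le_phi[of q] t0 t1 unfolding A_def N_def
    by (smt (verit, best) mult_left_mono distrib_left mult.left_commute)
  have "N\<^sup>2 - (norm m)\<^sup>2 = 2 * t * (1 - t) * P"
    unfolding N_def m_def P_def by (rule norm_convex_combination_sq_gap)
  moreover have "(N - norm m) * (N + norm m) \<le> (N - norm m) * (2 * N)"
    using MN by (intro mult_left_mono) auto
  ultimately have NP: "t * (1 - t) * P \<le> (N - norm m) * N"
    by (simp add: power2_eq_square algebra_simps)
  have "(\<phi> m)\<^sup>2 \<le> (A - \<gamma> * (N - norm m))\<^sup>2"
    using phi_m phi_nonneg[of m] by (intro power_mono) auto
  also have "\<dots> = A\<^sup>2 - \<gamma> * (N - norm m) * A - \<gamma> * (N - norm m) * (A - \<gamma> * (N - norm m))"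
    by (simp add: power2_eq_square algebra_simps)
  also have "\<dots> \<le> A\<^sup>2 - \<gamma> * (N - norm m) * A"
    using phi_m phi_nonneg[of m] MN gamma_pos by simp
  also have "\<dots> \<le> A\<^sup>2 - \<gamma> * (N - norm m) * (\<gamma> * N)"
    using AN MN gamma_pos by (simp add: mult_left_mono)
  also have "\<dots> \<le> A\<^sup>2 - \<gamma>\<^sup>2 * (t * (1 - t) * P)"
    using mult_left_mono[OF NP, of "\<gamma>\<^sup>2"] by (simp add: power2_eq_square algebra_simps)
  also have "A\<^sup>2 = (1 - t) * (\<phi> p)\<^sup>2 + t * (\<phi> q)\<^sup>2 - t * (1 - t) * (\<phi> p - \<phi> q)\<^sup>2"
    by (simp add: A_def power2_eq_square algebra_simps)
  finally show ?thesis
    by (simp add: m_def P_def algebra_simps)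
qed

definition sc_modulus :: real where "sc_modulus = \<gamma> ^ 4 / (8 * C\<^sup>2)"

lemma sc_modulus_pos: "0 < sc_modulus"
  using gamma_pos C_pos by (simp add: sc_modulus_def)

lemma sc_modulus_norm_sq_le:
  "sc_modulus * (norm (p - q))\<^sup>2 \<le> (\<phi> p - \<phi> q)\<^sup>2 + \<gamma>\<^sup>2 * (norm p * norm q - p \<bullet> q)"
proof -
  define e where "e = \<gamma>\<^sup>2 / (4 * C\<^sup>2)"
  define E where "E = (\<phi> p - \<phi> q)\<^sup>2"
  define D where "D = norm p - norm q"
  define P where "P = norm p * norm q - p \<bullet> q"
  have P: "0 \<le> P"
    using norm_cauchy_schwarz[of p q] by (simp add: P_def)
  have e: "0 \<le> e" "e \<le> 1/4"
    using power_mono[OF gamma_le_C, of 2] gamma_pos C_pos by (auto simp: e_def field_simps)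
  have "e * (\<gamma>\<^sup>2 * D\<^sup>2 / 2 - 2 * C\<^sup>2 * P) \<le> e * E"
    using phi_diff_sq_ge[of p q] e by (intro mult_left_mono) (auto simp: E_def D_def P_def)
  moreover have "e * (\<gamma>\<^sup>2 * D\<^sup>2 / 2 - 2 * C\<^sup>2 * P) = e * \<gamma>\<^sup>2 * D\<^sup>2 / 2 - \<gamma>\<^sup>2 * P / 2"
    using C_pos by (simp add: e_def field_simps)
  moreover have "e * E \<le> E"
    using e by (simp add: E_def mult_left_le_one_le)
  moreover have "e * (\<gamma>\<^sup>2 * P) \<le> \<gamma>\<^sup>2 * P / 2"
    using mult_right_mono[of e "1/2" "\<gamma>\<^sup>2 * P"] e P by simp
  moreover have "(norm (p - q))\<^sup>2 = D\<^sup>2 + 2 * P"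
  proof -
    have "(norm (p - q))\<^sup>2 = p \<bullet> p - 2 * (p \<bullet> q) + q \<bullet> q"
      unfolding power2_norm_eq_inner by (simp add: inner_diff_left inner_diff_right inner_commute)
    then show ?thesis
      by (simp add: D_def P_def power2_eq_square algebra_simps flip: power2_norm_eq_inner)
  qed
  then have "sc_modulus * (norm (p - q))\<^sup>2 = e * \<gamma>\<^sup>2 * D\<^sup>2 / 2 + e * (\<gamma>\<^sup>2 * P)"
    using C_pos by (simp add: sc_modulus_def e_def field_simps power2_eq_square power4_eq_xxxx)
  ultimately show ?thesis
    unfolding E_def P_def by linarith
qed

lemma phi_sq_strongly_convex:
  assumes "0 \<le> t" and "t \<le> 1"
  shows "(\<phi> ((1 - t) *\<^sub>R p + t *\<^sub>R q))\<^sup>2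
    \<le> (1 - t) * (\<phi> p)\<^sup>2 + t * (\<phi> q)\<^sup>2 - t * (1 - t) * sc_modulus * (norm (p - q))\<^sup>2"
proof -
  have "t * (1 - t) * (sc_modulus * (norm (p - q))\<^sup>2)
    \<le> t * (1 - t) * ((\<phi> p - \<phi> q)\<^sup>2 + \<gamma>\<^sup>2 * (norm p * norm q - p \<bullet> q))"
    using assms sc_modulus_norm_sq_le by (intro mult_left_mono) auto
  then show ?thesis
    using phi_sq_convex_bound[OF assms, of p q] by (simp add: mult.assoc)
qed

lemma phi_sq_increment_ge:
  assumes "0 < \<theta>" and "\<theta> < 1" and "\<phi> z \<le> \<phi> (z + \<theta> *\<^sub>R y)"
  shows "(1 - \<theta>) * sc_modulus * (norm y)\<^sup>2 \<le> (\<phi> (z + y))\<^sup>2 - (\<phi> z)\<^sup>2"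
proof -
  have "(\<phi> z)\<^sup>2 \<le> (\<phi> (z + \<theta> *\<^sub>R y))\<^sup>2"
    using assms(3) phi_nonneg by (intro power_mono) auto
  also have "z + \<theta> *\<^sub>R y = (1 - \<theta>) *\<^sub>R z + \<theta> *\<^sub>R (z + y)"
    by (simp add: algebra_simps)
  also have "(\<phi> \<dots>)\<^sup>2 \<le> (1 - \<theta>) * (\<phi> z)\<^sup>2 + \<theta> * (\<phi> (z + y))\<^sup>2
      - \<theta> * (1 - \<theta>) * sc_modulus * (norm y)\<^sup>2"
    using phi_sq_strongly_convex[of \<theta> z "z + y"] assms by simp
  finally have "\<theta> * ((1 - \<theta>) * sc_modulus * (norm y)\<^sup>2) \<le> \<theta> * ((\<phi> (z + y))\<^sup>2 - (\<phi> z)\<^sup>2)"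
    by (simp add: algebra_simps)
  then show ?thesis
    using assms(1) by simp
qed

lemma dist_fn_le: "k \<in> K \<Longrightarrow> dist_fn \<phi> K x \<le> \<phi> (k - x)"
  unfolding dist_fn_def by (rule cInf_lower) (auto intro!: bdd_belowI[of _ 0] phi_nonneg)

lemma dist_fn_greatest: "K \<noteq> {} \<Longrightarrow> (\<And>k. k \<in> K \<Longrightarrow> c \<le> \<phi> (k - x)) \<Longrightarrow> c \<le> dist_fn \<phi> K x"
  unfolding dist_fn_def by (rule cInf_greatest) auto

lemma nearest_nonempty:
  assumes K: "closed K" "K \<noteq> {}"
  shows "nearest \<phi> K x \<noteq> {}"
proof -
  obtain k0 where k0: "k0 \<in> K"
    using K by auto
  define S where "S = K \<inter> cball x (\<phi> (k0 - x) / \<gamma>)"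
  have far: "\<phi> (k0 - x) < \<phi> (k - x)" if "k \<in> K - S" for k
  proof -
    have "\<phi> (k0 - x) < \<gamma> * norm (k - x)"
      using that gamma_pos by (auto simp: S_def dist_norm norm_minus_commute field_simps)
    also have "\<dots> \<le> \<phi> (k - x)"
      by (rule gamma_norm_le_phi)
    finally show ?thesis .
  qed
  have "k0 \<in> S"
    using k0 far by fastforce
  moreover have "compact S"
    unfolding S_def using K by (intro closed_Int_compact) auto
  moreover have "continuous_on S (\<lambda>k. \<phi> (k - x))"
    by (rule continuous_on_compose2[OF continuous_on_phi[of UNIV]]) (auto intro!: continuous_intros)
  ultimately obtain w where w: "w \<in> S" and min_S: "\<forall>k\<in>S. \<phi> (w - x) \<le> \<phi> (k - x)"
    using continuous_attains_inf[of S "\<lambda>k. \<phi> (k - x)"] by blast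
  have min_K: "\<phi> (w - x) \<le> \<phi> (k - x)" if "k \<in> K" for k
    using that min_S far[of k] \<open>k0 \<in> S\<close> by fastforce
  have "w \<in> K"
    using w by (simp add: S_def)
  then have "dist_fn \<phi> K x = \<phi> (w - x)"
    using dist_fn_le dist_fn_greatest[OF K(2)] min_K by (meson order_antisym)
  then have "w \<in> nearest \<phi> K x"
    using \<open>w \<in> K\<close> by (simp add: nearest_def phi_minus_commute)
  then show ?thesis
    by blast
qed

lemma some_nearest:
  "closed K \<Longrightarrow> K \<noteq> {} \<Longrightarrow> (SOME w. w \<in> nearest \<phi> K x) \<in> nearest \<phi> K x"
  using nearest_nonempty by (simp add: some_in_eq)

lemma reach_ball_avoids:
  assumes K: "closed K" "K \<noteq> {}" and reach: "ereal lam \<le> reach_fn \<phi> K a"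
    and "\<mu> < lam" and "k \<in> K"
    and w: "w = (SOME w. w \<in> nearest \<phi> K a)"
  shows "\<mu> * \<phi> (a - w) \<le> \<phi> ((k - w) - \<mu> *\<^sub>R (a - w))"
proof -
  have "w \<in> nearest \<phi> K a"
    unfolding w using some_nearest[OF K] .
  then have \<delta>: "\<phi> (a - w) = dist_fn \<phi> K a"
    by (simp add: nearest_def)
  define S where "S = {s'::real. dist_fn \<phi> K (w + s' *\<^sub>R (a - w)) = s' * dist_fn \<phi> K a}"
  have "ereal \<mu> < ereal lam"
    using \<open>\<mu> < lam\<close> by simp
  then have "ereal \<mu> < Sup (ereal ` S)"
    using reach unfolding reach_fn_def Let_def S_def w[symmetric] by (rule order_less_le_trans)
  then obtain s' where "s' \<in> S" and "\<mu> < s'"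
    by (auto simp: less_Sup_iff)
  have "s' * \<phi> (a - w) = dist_fn \<phi> K (w + s' *\<^sub>R (a - w))"
    using \<open>s' \<in> S\<close> \<delta> by (simp add: S_def)
  also have "\<dots> \<le> \<phi> (k - (w + s' *\<^sub>R (a - w)))"
    using \<open>k \<in> K\<close> by (rule dist_fn_le)
  also have "k - (w + s' *\<^sub>R (a - w)) = ((k - w) - \<mu> *\<^sub>R (a - w)) + (- ((s' - \<mu>) *\<^sub>R (a - w)))"
    by (simp add: algebra_simps)
  also have "\<phi> \<dots> \<le> \<phi> ((k - w) - \<mu> *\<^sub>R (a - w)) + (s' - \<mu>) * \<phi> (a - w)"
    using phi_triangle[of "(k - w) - \<mu> *\<^sub>R (a - w)" "- ((s' - \<mu>) *\<^sub>R (a - w))"] \<open>\<mu> < s'\<close>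
    by (simp add: phi_scaleR_nonneg)
  finally show ?thesis
    by (simp add: algebra_simps)
qed

end

locale C2_norm = norm_fun +
  fixes f' :: "'a \<Rightarrow> 'a \<Rightarrow>\<^sub>L real" and f'' :: "'a \<Rightarrow> 'a \<Rightarrow>\<^sub>L ('a \<Rightarrow>\<^sub>L real)"
  assumes phi_has_derivative: "x \<noteq> 0 \<Longrightarrow> (\<phi> has_derivative blinfun_apply (f' x)) (at x)"
    and f'_has_derivative: "x \<noteq> 0 \<Longrightarrow> (f' has_derivative blinfun_apply (f'' x)) (at x)"
    and continuous_on_f'': "continuous_on (UNIV - {0}) f''"
begin

lemma f'_scaleR:
  assumes t: "0 < t" and x: "x \<noteq> 0"
  shows "f' (t *\<^sub>R x) = f' x"
proof -
  have "((\<lambda>v. \<phi> (t *\<^sub>R v)) has_derivative (\<lambda>v. f' (t *\<^sub>R x) (t *\<^sub>R v))) (at x)"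
    using t x by (intro has_derivative_compose[OF _ phi_has_derivative]
        has_derivative_scaleR_right has_derivative_ident) auto
  moreover have "(\<lambda>v. \<phi> (t *\<^sub>R v)) = (\<lambda>v. t *\<^sub>R \<phi> v)"
    using t by (auto simp: phi_scaleR_nonneg)
  ultimately have "(\<lambda>v. f' (t *\<^sub>R x) (t *\<^sub>R v)) = (\<lambda>v. t *\<^sub>R f' x v)"
    using has_derivative_unique[OF _ has_derivative_scaleR_right[OF phi_has_derivative[OF x]]]
    by simp
  then have "\<And>v. t * f' (t *\<^sub>R x) v = t * f' x v"
    by (metis blinfun.scaleR_right real_scaleR_def)
  then show ?thesis
    using t by (intro blinfun_eqI) simp
qed

lemma f''_scaleR:
  assumes t: "0 < t" and x: "x \<noteq> 0"
  shows "f'' (t *\<^sub>R x) = (1 / t) *\<^sub>R f'' x"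
proof -
  have "((\<lambda>v. f' (t *\<^sub>R v)) has_derivative (\<lambda>v. f'' (t *\<^sub>R x) (t *\<^sub>R v))) (at x)"
    using t x by (intro has_derivative_compose[OF _ f'_has_derivative]
        has_derivative_scaleR_right has_derivative_ident) auto
  then have "(f' has_derivative (\<lambda>v. f'' (t *\<^sub>R x) (t *\<^sub>R v))) (at x)"
    by (rule has_derivative_transform_within_open[where s = "UNIV - {0}"])
      (use x t f'_scaleR in auto)
  then have "(\<lambda>v. f'' (t *\<^sub>R x) (t *\<^sub>R v)) = blinfun_apply (f'' x)"
    using has_derivative_unique[OF _ f'_has_derivative[OF x]] by simp
  then have scaled: "f'' x v = t *\<^sub>R f'' (t *\<^sub>R x) v" for v
    by (metis blinfun.scaleR_right)
  have "f'' (t *\<^sub>R x) v = (1 / t) *\<^sub>R f'' x v" for v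
    using t by (simp add: scaled)
  then show ?thesis
    by (intro blinfun_eqI) (simp add: scaleR_blinfun.rep_eq)
qed

lemma continuous_on_f': "continuous_on (UNIV - {0}) f'"
  using f'_has_derivative has_derivative_continuous
  by (blast intro: continuous_at_imp_continuous_on)

lemma norm_f'_bounded:
  obtains B where "0 \<le> B" and "\<And>x. x \<noteq> 0 \<Longrightarrow> norm (f' x) \<le> B"
proof -
  have "bounded (f' ` sphere 0 1)"
    by (intro compact_imp_bounded compact_continuous_image continuous_on_subset[OF continuous_on_f'])
      auto
  then obtain B where B: "0 < B" "\<And>y. y \<in> f' ` sphere 0 1 \<Longrightarrow> norm y \<le> B"
    by (auto simp: bounded_pos)
  have "norm (f' x) \<le> B" if "x \<noteq> 0" for x
  proof -
    have "f' x = f' ((1 / norm x) *\<^sub>R x)"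
      using f'_scaleR[of "norm x" "(1 / norm x) *\<^sub>R x"] that by simp
    then show ?thesis
      using B(2)[of "f' x"] that by simp
  qed
  with B(1) show thesis
    by (intro that[of B]) auto
qed

lemma norm_f''_bounded:
  obtains M where "0 \<le> M" and "\<And>x. x \<noteq> 0 \<Longrightarrow> norm (f'' x) \<le> M / norm x"
proof -
  have "bounded (f'' ` sphere 0 1)"
    by (intro compact_imp_bounded compact_continuous_image continuous_on_subset[OF continuous_on_f''])
      auto
  then obtain M where M: "0 < M" "\<And>y. y \<in> f'' ` sphere 0 1 \<Longrightarrow> norm y \<le> M"
    by (auto simp: bounded_pos)
  have "norm (f'' x) \<le> M / norm x" if "x \<noteq> 0" for x
  proof -
    have "f'' x = (1 / norm x) *\<^sub>R f'' ((1 / norm x) *\<^sub>R x)"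
      using f''_scaleR[of "norm x" "(1 / norm x) *\<^sub>R x"] that by simp
    then show ?thesis
      using M(2)[of "f'' ((1 / norm x) *\<^sub>R x)"] that by (simp add: divide_right_mono)
  qed
  with M(1) show thesis
    by (intro that[of M]) auto
qed

definition grad_sq :: "'a \<Rightarrow> 'a \<Rightarrow>\<^sub>L real" where
  "grad_sq x = (2 * \<phi> x) *\<^sub>R f' x"

context
  fixes B M :: real
  assumes B: "0 \<le> B" "\<And>x. x \<noteq> 0 \<Longrightarrow> norm (f' x) \<le> B"
    and M: "0 \<le> M" "\<And>x. x \<noteq> 0 \<Longrightarrow> norm (f'' x) \<le> M / norm x"
begin

lemma f'_diff_le_near:
  assumes q: "q \<noteq> 0" and pq: "norm (p - q) \<le> norm q / 2"
  shows "norm (f' p - f' q) \<le> 2 * M / norm q * norm (p - q)"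
proof -
  have away: "norm q / 2 \<le> norm x" if "x \<in> closed_segment q p" for x
  proof -
    have "norm (x - q) \<le> norm (p - q)"
      using segment_bound1[OF that] .
    moreover have "norm q \<le> norm x + norm (x - q)"
      using norm_triangle_sub[of q x] by (simp add: norm_minus_commute)
    ultimately show ?thesis
      using pq by linarith
  qed
  then have nonzero: "x \<noteq> 0" if "x \<in> closed_segment q p" for x
    using that q by fastforce
  show ?thesis
  proof (rule differentiable_bound[of "closed_segment q p" f' "\<lambda>x. blinfun_apply (f'' x)"])
    show "(f' has_derivative blinfun_apply (f'' x)) (at x within closed_segment q p)"
      if "x \<in> closed_segment q p" for x
      using f'_has_derivative[OF nonzero[OF that]] by (rule has_derivative_at_withinI)
    show "onorm (blinfun_apply (f'' x)) \<le> 2 * M / norm q" if "x \<in> closed_segment q p" for x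
    proof -
      have "onorm (blinfun_apply (f'' x)) \<le> M / norm x"
        using M(2)[OF nonzero[OF that]] by (simp add: norm_blinfun.rep_eq)
      also have "\<dots> \<le> M / (norm q / 2)"
        using away[OF that] nonzero[OF that] q M(1) by (intro divide_left_mono) auto
      finally show ?thesis
        by (simp add: mult.commute)
    qed
  qed auto
qed

lemma f'_diff_le:
  assumes q: "q \<noteq> 0" and le: "norm q \<le> norm p"
  shows "norm (f' p - f' q) \<le> (2 * M + 4 * B) * norm (p - q) / norm q"
proof (cases "norm (p - q) \<le> norm q / 2")
  case True
  then have "norm (f' p - f' q) \<le> 2 * M * norm (p - q) / norm q"
    using f'_diff_le_near[OF q] by simp
  also have "\<dots> \<le> (2 * M + 4 * B) * norm (p - q) / norm q"
    using B(1) by (intro divide_right_mono mult_right_mono) auto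
  finally show ?thesis .
next
  case False
  have "p \<noteq> 0"
    using le q by auto
  then have "norm (f' p - f' q) \<le> 2 * B"
    using norm_triangle_ineq4[of "f' p" "f' q"] B(2)[of p] B(2)[OF q] by simp
  also have "\<dots> \<le> 4 * B * norm (p - q) / norm q"
    using False B(1) q by (simp add: field_simps mult_left_mono)
  also have "\<dots> \<le> (2 * M + 4 * B) * norm (p - q) / norm q"
    using M(1) by (intro divide_right_mono mult_right_mono) auto
  finally show ?thesis .
qed

lemma grad_sq_diff_le_of_norm_le:
  assumes le: "norm q \<le> norm p"
  shows "norm (grad_sq p - grad_sq q) \<le> 2 * C * (B + 2 * M + 4 * B) * norm (p - q)"
proof (cases "q = 0")
  case True
  have "norm (grad_sq p) = 2 * \<phi> p * norm (f' p)"
    using phi_nonneg[of p] by (simp add: grad_sq_def)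
  also have "\<dots> \<le> 2 * (C * norm p) * B"
  proof (cases "p = 0")
    case False
    then show ?thesis
      using phi_le_C_norm[of p] phi_nonneg[of p] C_pos B by (intro mult_mono) auto
  qed simp
  also have "\<dots> \<le> 2 * C * (B + 2 * M + 4 * B) * norm p"
    using mult_left_mono[OF mult_right_mono[of B "B + 2 * M + 4 * B" "norm p"], of "2 * C"]
      B(1) M(1) C_pos by (simp add: mult_ac)
  finally show ?thesis
    using True by (simp add: grad_sq_def)
next
  case False
  have "p \<noteq> 0"
    using le False by auto
  have "grad_sq p - grad_sq q = (2 * (\<phi> p - \<phi> q)) *\<^sub>R f' p + (2 * \<phi> q) *\<^sub>R (f' p - f' q)"
    by (simp add: grad_sq_def algebra_simps)
  then have "norm (grad_sq p - grad_sq q)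
      \<le> norm ((2 * (\<phi> p - \<phi> q)) *\<^sub>R f' p) + norm ((2 * \<phi> q) *\<^sub>R (f' p - f' q))"
    by (simp only: norm_triangle_ineq)
  also have "\<dots> = 2 * \<bar>\<phi> p - \<phi> q\<bar> * norm (f' p) + 2 * \<phi> q * norm (f' p - f' q)"
    by (simp only: norm_scaleR abs_mult abs_numeral abs_of_nonneg[OF phi_nonneg[of q]])
  also have "\<dots> \<le> 2 * (C * norm (p - q)) * B
      + 2 * (C * norm q) * ((2 * M + 4 * B) * norm (p - q) / norm q)"
    using phi_abs_diff_le_C_norm[of p q] B(2)[OF \<open>p \<noteq> 0\<close>] phi_le_C_norm[of q]
      f'_diff_le[OF False le] phi_nonneg[of q] B(1) C_pos
    by (intro add_mono mult_mono) auto
  also have "\<dots> = 2 * C * (B + 2 * M + 4 * B) * norm (p - q)"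
    using False by (simp add: field_simps)
  finally show ?thesis .
qed

end

lemma grad_sq_has_derivative: "((\<lambda>x. (\<phi> x)\<^sup>2) has_derivative blinfun_apply (grad_sq x)) (at x)"
proof (cases "x = 0")
  case False
  have "((\<lambda>x. \<phi> x * \<phi> x) has_derivative (\<lambda>h. \<phi> x * f' x h + f' x h * \<phi> x)) (at x)"
    by (rule has_derivative_mult[OF phi_has_derivative[OF False] phi_has_derivative[OF False]])
  moreover have "(\<lambda>h. \<phi> x * f' x h + f' x h * \<phi> x) = blinfun_apply (grad_sq x)"
    by (rule ext) (simp add: grad_sq_def scaleR_blinfun.rep_eq)
  ultimately show ?thesis
    by (simp add: power2_eq_square)
next
  case True
  have "((\<lambda>h. norm ((\<phi> h)\<^sup>2) / norm h) \<longlongrightarrow> 0) (at 0)"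
  proof (rule Lim_null_comparison)
    have "(\<phi> h)\<^sup>2 / norm h \<le> C\<^sup>2 * norm h" for h
    proof (cases "h = 0")
      case False
      have "(\<phi> h)\<^sup>2 \<le> (C * norm h)\<^sup>2"
        using phi_le_C_norm[of h] phi_nonneg[of h] by (intro power_mono) auto
      then show ?thesis
        using False by (simp add: power2_eq_square divide_le_eq mult_ac)
    qed simp
    then show "\<forall>\<^sub>F h in at 0. norm (norm ((\<phi> h)\<^sup>2) / norm h) \<le> C\<^sup>2 * norm h"
      by simp
    show "((\<lambda>h. C\<^sup>2 * norm h) \<longlongrightarrow> 0) (at (0::'a))"
      by (intro tendsto_mult_right_zero tendsto_norm_zero tendsto_ident_at)
  qed
  then show ?thesis
    using True by (simp add: has_derivative_at grad_sq_def blinfun.bounded_linear_right)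
qed

lemma grad_sq_lipschitz:
  obtains L where "0 \<le> L" and "\<And>p q. norm (grad_sq p - grad_sq q) \<le> L * norm (p - q)"
proof -
  obtain B where B: "0 \<le> B" "\<And>x. x \<noteq> 0 \<Longrightarrow> norm (f' x) \<le> B"
    using norm_f'_bounded by blast
  obtain M where M: "0 \<le> M" "\<And>x. x \<noteq> 0 \<Longrightarrow> norm (f'' x) \<le> M / norm x"
    using norm_f''_bounded by blast
  note bound = grad_sq_diff_le_of_norm_le[OF B M]
  show thesis
  proof (rule that)
    show "0 \<le> 2 * C * (B + 2 * M + 4 * B)"
      using B(1) M(1) C_pos by simp
    show "norm (grad_sq p - grad_sq q) \<le> 2 * C * (B + 2 * M + 4 * B) * norm (p - q)" for p q
      using bound[of q p] bound[of p q] by (cases "norm q \<le> norm p") (auto simp: norm_minus_commute)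
  qed
qed

lemma phi_sq_second_difference:
  obtains L where "0 \<le> L"
    and "\<And>z y h. (\<phi> (z + y))\<^sup>2 - (\<phi> z)\<^sup>2 \<le> (\<phi> (z + y - h))\<^sup>2 - (\<phi> (z - h))\<^sup>2 + L * norm y * norm h"
proof -
  obtain L where "0 \<le> L" and "\<And>p q. norm (grad_sq p - grad_sq q) \<le> L * norm (p - q)"
    using grad_sq_lipschitz by blast
  then show thesis
    using that second_difference_le[OF grad_sq_has_derivative] by blast
qed

end

locale smooth_uc_norm = uc_norm +
  fixes L :: real
  assumes L_nonneg: "0 \<le> L"
    and phi_sq_second_difference:
      "\<And>z y h. (\<phi> (z + y))\<^sup>2 - (\<phi> z)\<^sup>2 \<le> (\<phi> (z + y - h))\<^sup>2 - (\<phi> (z - h))\<^sup>2 + L * norm y * norm h"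
begin

definition proj_lip :: "real \<Rightarrow> real" where
  "proj_lip \<mu> = L / (sc_modulus * (1 - 1 / \<mu>))"

lemma proj_lip_nonneg: "1 < \<mu> \<Longrightarrow> 0 \<le> proj_lip \<mu>"
  using L_nonneg sc_modulus_pos by (simp add: proj_lip_def)

text \<open>With \<open>u = a - w\<close>, \<open>v = y - w\<close> and \<open>x = b - w\<close>: the point \<open>y\<close> lies outside the
  reach ball of \<open>a\<close> and is at least as close to \<open>b\<close> as \<open>w\<close> is.\<close>
lemma displacement_le_proj_lip:
  assumes \<mu>: "1 < \<mu>" and outside: "\<mu> * \<phi> u \<le> \<phi> (v - \<mu> *\<^sub>R u)" and closer: "\<phi> (x - v) \<le> \<phi> x"
  shows "norm v \<le> proj_lip \<mu> * norm (x - u)"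
proof -
  define \<theta> where "\<theta> = 1 / \<mu>"
  have \<theta>: "0 < \<theta>" "\<theta> < 1"
    using \<mu> by (auto simp: \<theta>_def)
  have "\<phi> (- u) \<le> (1 / \<mu>) * \<phi> (v - \<mu> *\<^sub>R u)"
    using outside \<mu> by (simp add: field_simps)
  also have "\<dots> = \<phi> ((1 / \<mu>) *\<^sub>R (v - \<mu> *\<^sub>R u))"
    using \<mu> by (simp add: phi_scaleR_nonneg)
  also have "(1 / \<mu>) *\<^sub>R (v - \<mu> *\<^sub>R u) = - u + \<theta> *\<^sub>R v"
    using \<mu> by (simp add: \<theta>_def algebra_simps)
  finally have "(1 - \<theta>) * sc_modulus * (norm v)\<^sup>2 \<le> (\<phi> (- u + v))\<^sup>2 - (\<phi> (- u))\<^sup>2"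
    using \<theta> by (intro phi_sq_increment_ge)
  also have "\<dots> \<le> (\<phi> (x - v))\<^sup>2 - (\<phi> x)\<^sup>2 + L * norm v * norm (x - u)"
    using phi_sq_second_difference[of "- u" v "x - u"] by (simp add: phi_minus_commute)
  also have "\<dots> \<le> L * norm v * norm (x - u)"
    using closer phi_nonneg[of "x - v"] power_mono[of "\<phi> (x - v)" "\<phi> x" 2] by simp
  finally have "((1 - \<theta>) * sc_modulus * norm v) * norm v \<le> (L * norm (x - u)) * norm v"
    by (simp add: power2_eq_square mult_ac)
  then have "(1 - \<theta>) * sc_modulus * norm v \<le> L * norm (x - u) \<or> v = 0"
    by (auto simp: mult_le_cancel_right)
  then show ?thesis
    using \<theta> sc_modulus_pos L_nonneg \<mu> by (auto simp: proj_lip_def \<theta>_def field_simps)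
qed

lemma nearest_displacement_le:
  assumes K: "closed K" and reach: "ereal lam \<le> reach_fn \<phi> K a"
    and \<mu>: "1 < \<mu>" "\<mu> < lam" and y: "y \<in> nearest \<phi> K b"
  shows "norm (y - (SOME w. w \<in> nearest \<phi> K a)) \<le> proj_lip \<mu> * norm (b - a)"
proof -
  define w where "w = (SOME w. w \<in> nearest \<phi> K a)"
  have "K \<noteq> {}"
    using y by (auto simp: nearest_def)
  have "y \<in> K" and "\<phi> (b - y) = dist_fn \<phi> K b"
    using y by (auto simp: nearest_def)
  moreover have "w \<in> K"
    using some_nearest[OF K \<open>K \<noteq> {}\<close>] by (simp add: w_def nearest_def)
  ultimately have "\<phi> ((b - w) - (y - w)) \<le> \<phi> (b - w)"
    using dist_fn_le[of w K b] by (simp add: phi_minus_commute)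
  moreover have "\<mu> * \<phi> (a - w) \<le> \<phi> ((y - w) - \<mu> *\<^sub>R (a - w))"
    using reach_ball_avoids[OF K \<open>K \<noteq> {}\<close> reach \<mu>(2) \<open>y \<in> K\<close> w_def] .
  ultimately have "norm (y - w) \<le> proj_lip \<mu> * norm ((b - w) - (a - w))"
    using displacement_le_proj_lip[OF \<mu>(1)] by blast
  then show ?thesis
    by (simp add: w_def)
qed

lemma the_elem_nearest:
  assumes K: "closed K" "K \<noteq> {}" and reach: "ereal lam \<le> reach_fn \<phi> K a"
    and \<mu>: "1 < \<mu>" "\<mu> < lam"
  shows "the_elem (nearest \<phi> K a) = (SOME w. w \<in> nearest \<phi> K a)"
proof -
  have "nearest \<phi> K a = {SOME w. w \<in> nearest \<phi> K a}"
    using some_nearest[OF K] nearest_displacement_le[OF K(1) reach \<mu>, of _ a] by fastforce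
  then show ?thesis
    by (metis the_elem_eq)
qed

lemma the_nearest_dist_le:
  assumes K: "closed K" and reach: "ereal lam \<le> reach_fn \<phi> K a"
    and \<mu>: "1 < \<mu>" "\<mu> < lam" and y: "y \<in> nearest \<phi> K b"
  shows "norm (the_elem (nearest \<phi> K a) - y) \<le> proj_lip \<mu> * norm (a - b)"
proof -
  have "K \<noteq> {}"
    using y by (auto simp: nearest_def)
  then show ?thesis
    using nearest_displacement_le[OF assms] the_elem_nearest[OF K _ reach \<mu>]
    by (simp add: norm_minus_commute)
qed

lemma phi_the_nearest_le:
  assumes K: "closed K" and reach: "ereal lam \<le> reach_fn \<phi> K a"
    and \<mu>: "1 < \<mu>" "\<mu> < lam" and y: "y \<in> nearest \<phi> K b"
  shows "\<phi> (the_elem (nearest \<phi> K a) - y) \<le> C * proj_lip \<mu> / \<gamma> * \<phi> (a - b)"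
proof -
  have "\<phi> (the_elem (nearest \<phi> K a) - y) \<le> C * norm (the_elem (nearest \<phi> K a) - y)"
    by (rule phi_le_C_norm)
  also have "\<dots> \<le> C * (proj_lip \<mu> * norm (a - b))"
    using the_nearest_dist_le[OF assms] C_pos by (intro mult_left_mono) auto
  also have "\<dots> \<le> C * (proj_lip \<mu> * (\<phi> (a - b) / \<gamma>))"
    using gamma_norm_le_phi[of "a - b"] gamma_pos C_pos proj_lip_nonneg[OF \<mu>(1)]
    by (intro mult_left_mono) (auto simp: field_simps)
  finally show ?thesis
    by simp
qed

lemma lipschitz_on_the_nearest:
  assumes K: "closed K" and \<mu>: "1 < \<mu>" "\<mu> < lam"
  shows "(proj_lip \<mu>)-lipschitz_on {a. ereal lam \<le> reach_fn \<phi> K a} (\<lambda>x. the_elem (nearest \<phi> K x))"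
proof (cases "K = {}")
  case True
  then show ?thesis
    using proj_lip_nonneg[OF \<mu>(1)] by (simp add: lipschitz_on_def nearest_def)
next
  case False
  show ?thesis
  proof (rule lipschitz_onI)
    fix a1 a2
    assume "a1 \<in> {a. ereal lam \<le> reach_fn \<phi> K a}" "a2 \<in> {a. ereal lam \<le> reach_fn \<phi> K a}"
    then have "the_elem (nearest \<phi> K a2) \<in> nearest \<phi> K a2"
      and "norm (the_elem (nearest \<phi> K a1) - the_elem (nearest \<phi> K a2)) \<le> proj_lip \<mu> * norm (a1 - a2)"
      using the_elem_nearest[OF K False _ \<mu>] some_nearest[OF K False]
        the_nearest_dist_le[OF K _ \<mu>] by auto
    then show "dist (the_elem (nearest \<phi> K a1)) (the_elem (nearest \<phi> K a2)) \<le> proj_lip \<mu> * dist a1 a2"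
      by (simp add: dist_norm)
  qed (rule proj_lip_nonneg[OF \<mu>(1)])
qed

end

theorem corollary3p10:
  fixes \<phi> :: "'a::euclidean_space \<Rightarrow> real" and s t lam :: real
  assumes "uniformly_convex_norm \<phi>"
    and "C2_on (UNIV - {0}) \<phi>"
    and "0 < s" and "s < t"
    and "1 < lam"
  shows "\<exists>\<Gamma>::real. \<forall>K. closed K \<longrightarrow>
           (\<forall>a b y. a \<in> K_lst \<phi> K lam s t \<and> y \<in> nearest \<phi> K b \<and> dist_fn \<phi> K b \<le> t \<longrightarrow>
              \<phi> (the_elem (nearest \<phi> K a) - y) \<le> \<Gamma> * \<phi> (a - b)) \<and>
           (\<exists>L. L-lipschitz_on (K_lst \<phi> K lam s t) (\<lambda>x. the_elem (nearest \<phi> K x)))"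
proof -
  obtain \<gamma> where "uc_norm \<phi> \<gamma>"
    using assms(1) by (auto simp: uniformly_convex_norm_def uc_norm_def uc_norm_axioms_def norm_fun_def)
  then interpret uc_norm \<phi> \<gamma> .
  obtain f' f'' where "C2_norm \<phi> f' f''"
    using assms(2) is_norm by (fastforce simp: C2_on_def C2_norm_def C2_norm_axioms_def norm_fun_def)
  then interpret C2_norm \<phi> f' f'' .
  obtain L where "0 \<le> L" and "\<And>z y h.
      (\<phi> (z + y))\<^sup>2 - (\<phi> z)\<^sup>2 \<le> (\<phi> (z + y - h))\<^sup>2 - (\<phi> (z - h))\<^sup>2 + L * norm y * norm h"
    using phi_sq_second_difference by blast
  then interpret smooth_uc_norm \<phi> \<gamma> L
    by unfold_locales
  define \<mu> where "\<mu> = (1 + lam) / 2"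
  have \<mu>: "1 < \<mu>" "\<mu> < lam"
    using assms(5) by (auto simp: \<mu>_def)
  have reach: "K_lst \<phi> K lam s t \<subseteq> {a. ereal lam \<le> reach_fn \<phi> K a}" for K
    by (auto simp: K_lst_def)
  have "\<phi> (the_elem (nearest \<phi> K a) - y) \<le> C * proj_lip \<mu> / \<gamma> * \<phi> (a - b)"
    if "closed K" "a \<in> K_lst \<phi> K lam s t" "y \<in> nearest \<phi> K b" for K a b y
    using phi_the_nearest_le[OF that(1) _ \<mu> that(3)] reach that(2) by blast
  then show ?thesis
    using lipschitz_on_subset[OF lipschitz_on_the_nearest[OF _ \<mu>] reach] by blast
qed

end
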